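(* Let $r\ge1$, $\mathbf{m}=(m_1,\ldots,m_r)\in\mathbb{N}^r$, $m=m_1+\cdots+m_r$, $\mathbf{f}\in\mathbb{C}^r$ with $(\mathbf{f})_{\mathbf{m}}\neq0$ and no $f_i$ a non-positive integer, and $a,b,c\in\mathbb{C}$ with $c\notin\{0,-1,-2,\ldots\}$. Then for $|x|<1$ $$ {}_{r+2}F_{r+1}\!\left(\begin{matrix}a,b,\mathbf{f}+\mathbf{m}\\ c,\mathbf{f}\end{matrix}\,\middle|\, x\right) =\frac{1}{(\mathbf{f})_{\mathbf{m}}}\sum_{k=0}^m(-1)^kD_k\,(b)_k\,{}_{2}F_{1}\!\left(\begin{matrix}a,b+k\\ c\end{matrix}\,\middle|\, x\right), $$ where $D_k=\sum_{j=k}^m\alpha_j\mathbf{S}_j^{(k)}=\frac{(-1)^k(\mathbf{f}-b)_{\mathbf{m}}}{k!}{}_{r+1}F_{r}\!\left(\begin{matrix}-k,1-\mathbf{f}+b\\1-\mathbf{f}+b-\mathbf{m}\end{matrix}\right)$ and $(\mathbf{f}-b-t)_{\mathbf{m}}=\sum_{j=0}^m\alpha_jt^j$.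
   Context: $(a)_k=\Gamma(a+k)/\Gamma(a)$. For vectors: $(\mathbf{f})_{\mathbf{m}}=\prod_i(f_i)_{m_i}$, $\mathbf{f}+\alpha$ and $\mathbf{f}+\mathbf{m}$ componentwise; a vector among hypergeometric parameters means its components are listed. ${}_pF_q(\mathbf{a};\mathbf{b};x)=\sum_{n\ge0}\frac{(a_1)_n\cdots(a_p)_n}{(b_1)_n\cdots(b_q)_n}\frac{x^n}{n!}$, and ${}_pF_q(\mathbf{a};\mathbf{b})$ means the value at $x=1$. $\mathbf{S}_j^{(k)}$ are Stirling numbers of the second kind. *)

theory Defs
  imports "HOL-Analysis.Analysis" "HOL-Combinatorics.Stirling"
    "HOL-Computational_Algebra.Polynomial"
begin

definition hypF :: "complex list \<Rightarrow> complex list \<Rightarrow> complex \<Rightarrow> complex" where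
  "hypF as bs x = (\<Sum>n. (\<Prod>a\<leftarrow>as. pochhammer a n) / (\<Prod>b\<leftarrow>bs. pochhammer b n)
                        * x ^ n / fact n)"

definition vpoch :: "complex list \<Rightarrow> nat list \<Rightarrow> complex" where
  "vpoch f ms = (\<Prod>i<length f. pochhammer (f ! i) (ms ! i))"

text \<open>alpha_j: coefficient of t^j in the polynomial (f - b - t)_m = prod_i (f_i - b - t)_{m_i}.\<close>
definition alpha :: "complex list \<Rightarrow> nat list \<Rightarrow> complex \<Rightarrow> nat \<Rightarrow> complex" where
  "alpha f ms b j = coeff (\<Prod>i<length f. pochhammer [: f ! i - b, -1 :] (ms ! i)) j"

definition Dcoef :: "complex list \<Rightarrow> nat list \<Rightarrow> complex \<Rightarrow> nat \<Rightarrow> complex" where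
  "Dcoef f ms b k = (\<Sum>j=k..sum_list ms. alpha f ms b j * of_nat (Stirling j k))"

end

theory Submission
  imports Defs "HOL-Computational_Algebra.Formal_Power_Series"
begin

text \<open>Expand the polynomial (f - b - t)_m in falling factorials t (t - 1) ... (t - k + 1);
  converting its powers with Stirling numbers of the second kind gives exactly the
  coefficients D_k. At t = -(b + n) the k-th falling factorial becomes (-1)^k (b + n)_k, and
  since (f + m)_n / (f)_n = (f + n)_m / (f)_m, the n-th term of the left-hand series splits into
  terms (b)_n (b + n)_k = (b)_k (b + k)_n, i.e. into terms of 2F1(a, b + k; c). The closed form
  of D_k is binomial inversion of the same expansion at t = 0, ..., k (exp x * exp (-x) = 1 on
  exponential generating functions), combined with the reflection
  (g)_m (1 - g)_n = (g - n)_m (1 - g - m)_n.\<close>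

definition falling_fact :: "nat \<Rightarrow> 'a::comm_ring_1 \<Rightarrow> 'a" where
  "falling_fact k t = (-1) ^ k * pochhammer (- t) k"

lemma falling_fact_0 [simp]: "falling_fact 0 t = 1"
  by (simp add: falling_fact_def)

lemma falling_fact_Suc: "falling_fact (Suc k) t = falling_fact k t * (t - of_nat k)"
  by (simp add: falling_fact_def pochhammer_rec' algebra_simps)

lemma falling_fact_of_nat:
  "falling_fact k (of_nat n :: 'a::field_char_0) = fact k * of_nat (n choose k)"
  by (simp add: falling_fact_def binomial_gbinomial gbinomial_pochhammer)

lemma power_eq_sum_Stirling_falling_fact:
  "t ^ j = (\<Sum>k\<le>j. of_nat (Stirling j k) * falling_fact k t)"
proof (induction j)
  case 0
  show ?case by simp
next
  case (Suc j)
  have "t ^ Suc j = (\<Sum>k\<le>j. of_nat (Stirling j k)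
      * (falling_fact (Suc k) t + of_nat k * falling_fact k t))"
    by (simp add: Suc.IH sum_distrib_left falling_fact_Suc algebra_simps)
  also have "\<dots> = (\<Sum>k\<le>j. of_nat (Stirling j k) * falling_fact (Suc k) t)
      + (\<Sum>k\<le>Suc j. of_nat k * of_nat (Stirling j k) * falling_fact k t)"
    by (simp add: sum.distrib algebra_simps)
  also have "\<dots> = (\<Sum>k\<le>Suc j. of_nat (Stirling (Suc j) k) * falling_fact k t)"
    by (simp only: sum.atMost_Suc_shift) (simp add: sum.distrib algebra_simps)
  finally show ?case .
qed

lemma poly_eq_sum_Stirling_falling_fact:
  fixes P :: "'a::comm_ring_1 poly"
  assumes "degree P \<le> m"
  shows "poly P t = (\<Sum>k\<le>m. (\<Sum>j=k..m. coeff P j * of_nat (Stirling j k)) * falling_fact k t)"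
proof -
  have "poly P t = (\<Sum>j\<le>m. coeff P j * t ^ j)"
    unfolding poly_altdef
    by (rule sum.mono_neutral_left) (use assms in \<open>auto simp: coeff_eq_0\<close>)
  also have "\<dots> = (\<Sum>j\<le>m. \<Sum>k\<le>m. coeff P j * of_nat (Stirling j k) * falling_fact k t)"
  proof (rule sum.cong [OF refl])
    fix j assume "j \<in> {..m}"
    then have "t ^ j = (\<Sum>k\<le>m. of_nat (Stirling j k) * falling_fact k t)"
      unfolding power_eq_sum_Stirling_falling_fact by (intro sum.mono_neutral_left) auto
    then show "coeff P j * t ^ j = (\<Sum>k\<le>m. coeff P j * of_nat (Stirling j k) * falling_fact k t)"
      by (simp add: sum_distrib_left mult.assoc)
  qed
  also have "\<dots> = (\<Sum>k\<le>m. \<Sum>j=k..m. coeff P j * of_nat (Stirling j k) * falling_fact k t)"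
    by (subst sum.swap) (intro sum.cong refl sum.mono_neutral_right; auto)
  finally show ?thesis
    by (simp add: sum_distrib_right)
qed

lemma poly_pochhammer: "poly (pochhammer p n) t = pochhammer (poly p t) n"
  by (induction n) (simp_all add: pochhammer_rec')

lemma degree_pochhammer_le: "degree p \<le> 1 \<Longrightarrow> degree (pochhammer p n) \<le> n"
proof (induction n)
  case (Suc n)
  have "degree (p + of_nat n) \<le> 1"
    using Suc.prems by (metis degree_add_le degree_of_nat le0)
  with Suc show ?case
    by (simp add: pochhammer_rec') (rule order.trans [OF degree_mult_le], simp)
qed simp

lemma prod_pochhammer_eq_sum_Dcoef:
  assumes "length ms = length f"
  shows "(\<Prod>i<length f. pochhammer (f ! i - b - t) (ms ! i))
           = (\<Sum>k\<le>sum_list ms. Dcoef f ms b k * falling_fact k t)"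
proof -
  define P where "P = (\<Prod>i<length f. pochhammer [: f ! i - b, -1 :] (ms ! i))"
  have "degree P \<le> (\<Sum>i<length f. degree (pochhammer [: f ! i - b, -1 :] (ms ! i)))"
    unfolding P_def using degree_prod_sum_le [of "{..<length f}"] by (simp add: o_def)
  also have "\<dots> \<le> (\<Sum>i<length f. ms ! i)"
    by (intro sum_mono degree_pochhammer_le) simp
  also have "\<dots> = sum_list ms"
    using assms by (simp add: sum_list_sum_nth atLeast0LessThan)
  finally have "degree P \<le> sum_list ms" .
  moreover have "(\<Prod>i<length f. pochhammer (f ! i - b - t) (ms ! i)) = poly P t"
    by (simp add: P_def poly_prod poly_pochhammer)
  ultimately show ?thesis
    by (simp add: poly_eq_sum_Stirling_falling_fact Dcoef_def alpha_def P_def)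
qed

lemma falling_fact_binomial_inversion:
  fixes P D :: "nat \<Rightarrow> 'a::field_char_0"
  assumes P: "\<And>n. P n = (\<Sum>k\<le>m. D k * falling_fact k (of_nat n))" and "k \<le> m"
  shows "D k = (\<Sum>n\<le>k. (-1) ^ (k - n) * of_nat (k choose n) * P n) / fact k"
proof -
  define E where "E = Abs_fps (\<lambda>k. if k \<le> m then D k else 0)"
  define A where "A = Abs_fps (\<lambda>n. P n / fact n)"
  have "A = E * fps_exp 1"
  proof (rule fps_ext)
    fix n
    have "fps_nth A n = (\<Sum>k\<in>{..m}. if k \<in> {..n} then D k / fact (n - k) else 0)"
      by (auto simp: A_def P sum_divide_distrib falling_fact_of_nat binomial_fact
          intro!: sum.cong)
    also have "\<dots> = (\<Sum>k\<in>{..n}. if k \<in> {..m} then D k / fact (n - k) else 0)"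
      by (simp only: sum.inter_restrict [symmetric] finite_atMost) (simp only: Int_commute)
    also have "\<dots> = fps_nth (E * fps_exp 1) n"
      by (auto simp: fps_mult_nth E_def atLeast0AtMost intro!: sum.cong)
    finally show "fps_nth A n = fps_nth (E * fps_exp 1) n" .
  qed
  then have E_eq: "E = A * fps_exp (-1)"
    by (simp add: mult.assoc flip: fps_exp_add_mult)
  have "D k = fps_nth E k"
    using assms(2) by (simp add: E_def)
  also have "\<dots> = (\<Sum>n\<le>k. P n / fact n * ((-1) ^ (k - n) / fact (k - n)))"
    unfolding E_eq by (simp add: fps_mult_nth A_def atLeast0AtMost)
  also have "\<dots> = (\<Sum>n\<le>k. (-1) ^ (k - n) * of_nat (k choose n) * P n) / fact k"
    unfolding sum_divide_distrib
  proof (rule sum.cong [OF refl])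
    fix n assume "n \<in> {..k}"
    then show "P n / fact n * ((-1) ^ (k - n) / fact (k - n))
        = (-1) ^ (k - n) * of_nat (k choose n) * P n / fact k"
      by (simp add: binomial_fact)
  qed
  finally show ?thesis .
qed

lemma pochhammer_shift_swap:
  "pochhammer z m * pochhammer (z + of_nat m) n = pochhammer z n * pochhammer (z + of_nat n) m"
  by (metis pochhammer_product' add.commute)

lemma pochhammer_reflect_shift:
  fixes g :: "'a::comm_ring_1"
  shows "pochhammer g m * pochhammer (1 - g) n
           = pochhammer (g - of_nat n) m * pochhammer (1 - g - of_nat m) n"
proof -
  have reflect_g: "pochhammer (1 - g) n = (-1) ^ n * pochhammer (g - of_nat n) n"
    using pochhammer_minus [of "g - 1" n] by (simp add: algebra_simps)
  have reflect_gm: "pochhammer (1 - g - of_nat m) n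
      = (-1) ^ n * pochhammer (g + of_nat m - of_nat n) n"
    using pochhammer_minus [of "g + of_nat m - 1" n] by (simp add: algebra_simps)
  have "pochhammer g m * pochhammer (g - of_nat n) n
      = pochhammer (g - of_nat n) m * pochhammer (g + of_nat m - of_nat n) n"
    using pochhammer_shift_swap [of "g - of_nat n" n m] by (simp add: algebra_simps)
  then show ?thesis
    unfolding reflect_g reflect_gm by (metis mult.left_commute)
qed

lemma hypF_terminating:
  "hypF (- of_nat k # as) bs x
     = (\<Sum>n\<le>k. pochhammer (- of_nat k) n * (\<Prod>a\<leftarrow>as. pochhammer a n)
                / (\<Prod>b\<leftarrow>bs. pochhammer b n) * x ^ n / fact n)"
  unfolding hypF_def list.map(2) prod_list.Cons
  by (rule suminf_finite) (auto simp: pochhammer_of_nat_eq_0_iff)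

lemma prod_list_map_upt: "prod_list (map F [0..<r]) = (\<Prod>i<r. F i)"
  by (induction r) (auto simp: lessThan_Suc mult.commute)

lemma prod_list_map_eq_prod_nth: "prod_list (map h xs) = (\<Prod>i<length xs. h (xs ! i))"
  by (subst prod.list_conv_set_nth) (auto simp: atLeast0LessThan intro!: prod.cong)

lemma summable_2F1_series:
  fixes a b c x :: complex
  assumes c: "\<forall>n::nat. c \<noteq> - of_nat n" and x: "norm x < 1"
  shows "summable (\<lambda>n. pochhammer a n * pochhammer b n / pochhammer c n * x ^ n / fact n)"
proof -
  define u where "u n = pochhammer a n * pochhammer b n / pochhammer c n * x ^ n / fact n" for n
  define q where "q n = x * ((1 + (a - c) / (c + of_nat n)) * (1 + (b - 1) / (of_nat n + 1)))" for n
  have c_shift: "c + of_nat n \<noteq> 0" for n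
    using c by (metis add.commute add_eq_0_iff)
  have "pochhammer c n \<noteq> 0" for n
    using c by (auto simp: pochhammer_eq_0_iff)
  moreover have "(of_nat n + 1 :: complex) \<noteq> 0" for n
    by (metis of_nat_Suc of_nat_eq_0_iff nat.distinct(1) add.commute)
  ultimately have u_Suc: "u (Suc n) = u n * q n" for n
    using c_shift [of n] by (simp add: u_def q_def pochhammer_rec' field_simps)
  have of_nat_at_infinity: "filterlim (\<lambda>n. of_nat n :: complex) at_infinity sequentially"
    using filterlim_compose [OF filterlim_of_real_at_infinity filterlim_real_sequentially]
    by simp
  have "q \<longlonglongrightarrow> x * ((1 + 0) * (1 + 0))"
    unfolding q_def
    by (intro tendsto_intros tendsto_divide_0 [OF tendsto_const]
        tendsto_add_filterlim_at_infinity [OF tendsto_const of_nat_at_infinity]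
        tendsto_add_filterlim_at_infinity' [OF of_nat_at_infinity tendsto_const])
  then have "(\<lambda>n. norm (q n)) \<longlonglongrightarrow> norm x"
    by (simp add: tendsto_norm)
  moreover have "norm x < (1 + norm x) / 2"
    using x by simp
  ultimately obtain N where N: "\<And>n. n \<ge> N \<Longrightarrow> norm (q n) < (1 + norm x) / 2"
    by (metis (no_types, lifting) eventually_sequentially order_tendstoD(2))
  have "summable u"
  proof (rule summable_ratio_test [of "(1 + norm x) / 2" N])
    show "(1 + norm x) / 2 < 1"
      using x by simp
    fix n assume "n \<ge> N"
    then have "norm (u n) * norm (q n) \<le> norm (u n) * ((1 + norm x) / 2)"
      using N [of n] by (intro mult_left_mono) auto
    then show "norm (u (Suc n)) \<le> (1 + norm x) / 2 * norm (u n)"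
      by (simp add: u_Suc norm_mult mult.commute)
  qed
  then show ?thesis
    unfolding u_def .
qed

lemma sum_mult_hypF_2F1_shifted:
  fixes a b c x :: complex and d :: "nat \<Rightarrow> complex"
  assumes "\<forall>n::nat. c \<noteq> - of_nat n" and "norm x < 1"
  shows "(\<Sum>k\<le>m. d k * pochhammer b k * hypF [a, b + of_nat k] [c] x)
     = (\<Sum>n. pochhammer a n * pochhammer b n / pochhammer c n * x ^ n / fact n
             * (\<Sum>k\<le>m. d k * pochhammer (b + of_nat n) k))"
proof -
  define G where "G k n = pochhammer a n * pochhammer (b + of_nat k) n / pochhammer c n
    * x ^ n / fact n" for k n
  have hypF_G: "hypF [a, b + of_nat k] [c] x = suminf (G k)" for k
    by (simp add: hypF_def G_def [abs_def])
  have summable_G: "summable (G k)" for k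
    unfolding G_def by (rule summable_2F1_series [OF assms])
  have G_shift: "d k * pochhammer b k * G k n = pochhammer a n * pochhammer b n / pochhammer c n
      * x ^ n / fact n * (d k * pochhammer (b + of_nat n) k)" for k n
  proof -
    have "d k * pochhammer b k * G k n = d k * (pochhammer b k * pochhammer (b + of_nat k) n)
        * (pochhammer a n / pochhammer c n * x ^ n / fact n)"
      by (simp add: G_def divide_inverse mult_ac)
    also have "\<dots> = d k * (pochhammer b n * pochhammer (b + of_nat n) k)
        * (pochhammer a n / pochhammer c n * x ^ n / fact n)"
      by (simp only: pochhammer_shift_swap)
    finally show ?thesis
      by (simp add: divide_inverse mult_ac)
  qed
  have "(\<Sum>k\<le>m. d k * pochhammer b k * hypF [a, b + of_nat k] [c] x)
      = (\<Sum>k\<le>m. \<Sum>n. d k * pochhammer b k * G k n)"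
    by (simp add: hypF_G suminf_mult summable_G)
  also have "\<dots> = (\<Sum>n. \<Sum>k\<le>m. d k * pochhammer b k * G k n)"
    by (rule suminf_sum [symmetric]) (intro summable_mult summable_G)
  finally show ?thesis
    by (simp add: G_shift sum_distrib_left)
qed

lemma hypF_shifted_parameters:
  assumes "\<forall>i<length f. \<forall>n::nat. f ! i \<noteq> - of_nat n" and "vpoch f ms \<noteq> 0"
  shows "hypF (as @ map (\<lambda>i. f ! i + of_nat (ms ! i)) [0..<length f]) (bs @ f) x
     = (\<Sum>n. (\<Prod>a\<leftarrow>as. pochhammer a n) / (\<Prod>b\<leftarrow>bs. pochhammer b n) * x ^ n / fact n
             * (\<Prod>i<length f. pochhammer (f ! i + of_nat n) (ms ! i)) / vpoch f ms)"
  unfolding hypF_def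
proof (intro arg_cong [where f = suminf] ext)
  fix n
  have "(\<Prod>i<length f. pochhammer (f ! i + of_nat (ms ! i)) n) * vpoch f ms
      = (\<Prod>i<length f. pochhammer (f ! i + of_nat n) (ms ! i)) * (\<Prod>i<length f. pochhammer (f ! i) n)"
    unfolding vpoch_def prod.distrib [symmetric]
    by (intro prod.cong refl) (metis pochhammer_shift_swap mult.commute)
  moreover have "(\<Prod>i<length f. pochhammer (f ! i) n) \<noteq> 0"
    using assms(1) by (auto simp: prod_zero_iff pochhammer_eq_0_iff)
  ultimately have ratio: "(\<Prod>i<length f. pochhammer (f ! i + of_nat (ms ! i)) n)
      / (\<Prod>i<length f. pochhammer (f ! i) n)
      = (\<Prod>i<length f. pochhammer (f ! i + of_nat n) (ms ! i)) / vpoch f ms"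
    using assms(2) by (simp add: divide_eq_eq eq_divide_eq)
  have "(\<Prod>a\<leftarrow>as @ map (\<lambda>i. f ! i + of_nat (ms ! i)) [0..<length f]. pochhammer a n)
      / (\<Prod>b\<leftarrow>bs @ f. pochhammer b n) * x ^ n / fact n
    = (\<Prod>a\<leftarrow>as. pochhammer a n) / (\<Prod>b\<leftarrow>bs. pochhammer b n) * x ^ n / fact n
      * ((\<Prod>i<length f. pochhammer (f ! i + of_nat (ms ! i)) n)
         / (\<Prod>i<length f. pochhammer (f ! i) n))"
    by (simp add: prod_list_map_upt prod_list_map_eq_prod_nth o_def divide_inverse
        inverse_mult_distrib mult_ac)
  then show "(\<Prod>a\<leftarrow>as @ map (\<lambda>i. f ! i + of_nat (ms ! i)) [0..<length f]. pochhammer a n)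
      / (\<Prod>b\<leftarrow>bs @ f. pochhammer b n) * x ^ n / fact n
    = (\<Prod>a\<leftarrow>as. pochhammer a n) / (\<Prod>b\<leftarrow>bs. pochhammer b n) * x ^ n / fact n
      * (\<Prod>i<length f. pochhammer (f ! i + of_nat n) (ms ! i)) / vpoch f ms"
    by (simp only: ratio times_divide_eq_right)
qed

lemma hypF_eq_sum_Dcoef_2F1:
  fixes f :: "complex list" and ms :: "nat list" and a b c x :: complex
  assumes "length ms = length f" and "vpoch f ms \<noteq> 0"
    and "\<forall>i<length f. \<forall>n::nat. f ! i \<noteq> - of_nat n"
    and "\<forall>n::nat. c \<noteq> - of_nat n" and "norm x < 1"
  shows "hypF ([a, b] @ map (\<lambda>i. f ! i + of_nat (ms ! i)) [0..<length f]) (c # f) x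
     = 1 / vpoch f ms * (\<Sum>k=0..sum_list ms.
          (-1) ^ k * Dcoef f ms b k * pochhammer b k * hypF [a, b + of_nat k] [c] x)"
proof -
  define d where "d k = (-1) ^ k * Dcoef f ms b k / vpoch f ms" for k
  have "(\<Prod>i<length f. pochhammer (f ! i + of_nat n) (ms ! i)) / vpoch f ms
      = (\<Sum>k\<le>sum_list ms. d k * pochhammer (b + of_nat n) k)" for n
    using prod_pochhammer_eq_sum_Dcoef [OF assms(1), of b "- (b + of_nat n)"]
    by (simp add: d_def falling_fact_def sum_divide_distrib ac_simps)
  then have "hypF ([a, b] @ map (\<lambda>i. f ! i + of_nat (ms ! i)) [0..<length f]) (c # f) x
      = (\<Sum>n. pochhammer a n * pochhammer b n / pochhammer c n * x ^ n / fact n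
          * (\<Sum>k\<le>sum_list ms. d k * pochhammer (b + of_nat n) k))"
    using hypF_shifted_parameters [OF assms(3,2), of "[a, b]" "[c]" x]
    by (simp only: times_divide_eq_right [symmetric]) simp
  also have "\<dots> = (\<Sum>k\<le>sum_list ms. d k * pochhammer b k * hypF [a, b + of_nat k] [c] x)"
    by (rule sum_mult_hypF_2F1_shifted [symmetric, OF assms(4,5)])
  finally have "hypF ([a, b] @ map (\<lambda>i. f ! i + of_nat (ms ! i)) [0..<length f]) (c # f) x
      = (\<Sum>k\<le>sum_list ms. d k * pochhammer b k * hypF [a, b + of_nat k] [c] x)" .
  then show ?thesis
    by (simp add: d_def sum_distrib_left atLeast0AtMost mult_ac)
qed

lemma Dcoef_eq_hypF:
  fixes f :: "complex list" and ms :: "nat list" and b :: complex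
  assumes "length ms = length f"
    and "\<forall>i<length f. pochhammer (1 - f ! i + b - of_nat (ms ! i)) (sum_list ms) \<noteq> 0"
    and "k \<le> sum_list ms"
  shows "Dcoef f ms b k = (-1) ^ k * vpoch (map (\<lambda>fi. fi - b) f) ms / fact k *
           hypF (- of_nat k # map (\<lambda>fi. 1 - fi + b) f)
                (map (\<lambda>i. 1 - f ! i + b - of_nat (ms ! i)) [0..<length f]) 1"
proof -
  define V where "V = (\<Prod>i<length f. pochhammer (f ! i - b) (ms ! i))"
  define P where "P n = (\<Prod>i<length f. pochhammer (f ! i - b - of_nat n) (ms ! i))" for n
  define A where "A n = (\<Prod>i<length f. pochhammer (1 - f ! i + b) n)" for n
  define B where "B n = (\<Prod>i<length f. pochhammer (1 - f ! i + b - of_nat (ms ! i)) n)" for n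
  have reflect: "V * A n = P n * B n" for n
    unfolding V_def A_def B_def P_def prod.distrib [symmetric]
    using pochhammer_reflect_shift [of "f ! i - b" "ms ! i" n for i]
    by (intro prod.cong refl) (simp add: algebra_simps)
  have B_nonzero: "B n \<noteq> 0" if "n \<le> k" for n
    unfolding B_def using assms(2,3) that
    by (auto simp: prod_zero_iff) (meson le_trans pochhammer_neq_0_mono)
  have "Dcoef f ms b k = (\<Sum>n\<le>k. (-1) ^ (k - n) * of_nat (k choose n) * P n) / fact k"
    using prod_pochhammer_eq_sum_Dcoef [OF assms(1)] assms(3)
    by (intro falling_fact_binomial_inversion) (simp_all add: P_def)
  also have "\<dots> = (-1) ^ k * V / fact k
      * (\<Sum>n\<le>k. pochhammer (- of_nat k) n * A n / B n * 1 ^ n / fact n)"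
    unfolding sum_distrib_left sum_divide_distrib
  proof (rule sum.cong [OF refl])
    fix n assume "n \<in> {..k}"
    then have "n \<le> k" by simp
    have "pochhammer (- of_nat k) n / fact n = (-1) ^ n * (of_nat (k choose n) :: complex)"
      by (simp add: binomial_gbinomial gbinomial_pochhammer)
    moreover have "(-1) ^ (k - n) = ((-1) ^ k * (-1) ^ n :: complex)"
      using \<open>n \<le> k\<close> by (simp add: neg_one_power_add_eq_neg_one_power_diff [symmetric] power_add)
    ultimately show "(-1) ^ (k - n) * of_nat (k choose n) * P n / fact k
        = (-1) ^ k * V / fact k * (pochhammer (- of_nat k) n * A n / B n * 1 ^ n / fact n)"
      using reflect [of n] B_nonzero [OF \<open>n \<le> k\<close>] by (simp add: field_simps)
  qed
  also have "\<dots> = (-1) ^ k * V / fact k *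
      hypF (- of_nat k # map (\<lambda>fi. 1 - fi + b) f)
           (map (\<lambda>i. 1 - f ! i + b - of_nat (ms ! i)) [0..<length f]) 1"
    by (simp add: hypF_terminating A_def B_def prod_list_map_upt prod_list_map_eq_prod_nth)
  finally show ?thesis
    by (simp add: V_def vpoch_def)
qed

theorem corollary1:
  fixes f :: "complex list" and ms :: "nat list" and a b c x :: complex
  assumes "length f \<ge> 1" and "length ms = length f"
    and "vpoch f ms \<noteq> 0"
    and "\<forall>i<length f. \<forall>n::nat. f ! i \<noteq> - of_nat n"
    and "\<forall>n::nat. c \<noteq> - of_nat n"
    and "norm x < 1"
  shows "(hypF ([a, b] @ map (\<lambda>i. f ! i + of_nat (ms ! i)) [0..<length f]) (c # f) x
           = 1 / vpoch f ms * (\<Sum>k=0..sum_list ms.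
                (-1) ^ k * Dcoef f ms b k * pochhammer b k * hypF [a, b + of_nat k] [c] x))
    \<and> ((\<forall>i<length f. pochhammer (1 - f ! i + b - of_nat (ms ! i)) (sum_list ms) \<noteq> 0) \<longrightarrow>
         (\<forall>k\<le>sum_list ms. Dcoef f ms b k =
           (-1) ^ k * vpoch (map (\<lambda>fi. fi - b) f) ms / fact k *
           hypF (- of_nat k # map (\<lambda>fi. 1 - fi + b) f)
                (map (\<lambda>i. 1 - f ! i + b - of_nat (ms ! i)) [0..<length f]) 1))"
  using hypF_eq_sum_Dcoef_2F1 [OF assms(2-6)] Dcoef_eq_hypF [OF assms(2)] by blast

end
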